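(* Let $1\le p<\infty$ and let $\rho\in L^1_{loc}(\mathbb{R}^d)$ be nonnegative, identified with the representative described in the context, and suppose there exist $\theta_0\in(0,1)$, a set $\Lambda\subset\mathbb{S}^{d-1}$ with $\mathcal{H}^{d-1}(\Lambda)>0$ and $\mathbf{v}_0\in\Lambda$ such that $\rho_{\theta_0}(r\mathbf{v})=\rho_{\theta_0}(r\mathbf{v}_0)$ for all $\mathbf{v}\in\Lambda$, $r>0$, and $\lim_{\delta\to0}\delta^p\big/\int_0^\delta\rho_{\theta_0}(r\mathbf{v}_0)r^{d-1}dr=0$. Then there exists a constant $C=C(\theta_0,p)>0$ such that for any $\delta>0$ and $\mathbf{v}\in\mathbb{S}^{d-1}$, $$F_p[\mathbf{u}](t\mathbf{v})\le C\,\frac{\delta^{p}}{\int_0^\delta\rho_{\theta_0}(s\mathbf{v})s^{d-1}\,ds}\int_0^\infty\rho(h\mathbf{v})\,h^{d-1}\,\frac{F_p[\mathbf{u}](h\mathbf{v})}{h^{p}}\,dh$$ for any $0<t<\delta$ and any $\mathbf{u}\in L^{p}(\mathbb{R}^d;\mathbb{R}^d)$.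
   Context: For $\mathbf{u}\in L^p(\mathbb{R}^d;\mathbb{R}^d)$ and $\mathbf{h}\in\mathbb{R}^d\setminus\{0\}$, $F_p[\mathbf{u}](\mathbf{h})=\int_{\mathbb{R}^d}\left|(\mathbf{u}(\mathbf{x}+\mathbf{h})-\mathbf{u}(\mathbf{x}))\cdot\frac{\mathbf{h}}{|\mathbf{h}|}\right|^{p}d\mathbf{x}$. The kernel $\rho$ is identified with the representative $\rho(\mathbf{x})=\lim_{h\to0}\frac{1}{|B_h(\mathbf{x})|}\int_{B_h(\mathbf{x})}\rho$ at Lebesgue points and $\rho(\mathbf{x})=\infty$ otherwise. For $\theta_0\in(0,1)$, $\mathbf{v}\in\mathbb{S}^{d-1}$, $r>0$: $\rho_{\theta_0}(r\mathbf{v})=\inf_{\theta\in[\theta_0,1]}\rho(\theta r\mathbf{v})\theta^{-p}$. *)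

theory Defs
  imports "HOL-Analysis.Analysis"
begin

text \<open>Unnormalised s-dimensional Hausdorff outer measure (s a natural number).
  Normalisation constants are irrelevant for positivity. Empty cover sets contribute 0,
  nonempty ones contribute diam^s (with the convention 0^0 = 1, so s = 0 is counting measure).\<close>
definition hausdorff_pre :: "nat \<Rightarrow> real \<Rightarrow> 'a::metric_space set \<Rightarrow> ennreal" where
  "hausdorff_pre s \<delta> A =
     (INF C \<in> {C :: nat \<Rightarrow> 'a set. A \<subseteq> (\<Union>i. C i) \<and>
                 (\<forall>i. bounded (C i) \<and> diameter (C i) \<le> \<delta>)}.
        (\<Sum>i. (if C i = {} then 0 else ennreal (diameter (C i) ^ s))))"

definition hausdorff_measure :: "nat \<Rightarrow> 'a::metric_space set \<Rightarrow> ennreal" where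
  "hausdorff_measure s A = (SUP \<delta> \<in> {0<..}. hausdorff_pre s \<delta> A)"

definition ball_avg :: "('a::euclidean_space \<Rightarrow> real) \<Rightarrow> 'a \<Rightarrow> real \<Rightarrow> real" where
  "ball_avg f x h = (LINT y : ball x h | lborel. f y) / measure lborel (ball x h)"

definition lebesgue_point :: "('a::euclidean_space \<Rightarrow> real) \<Rightarrow> 'a \<Rightarrow> bool" where
  "lebesgue_point f x \<longleftrightarrow>
     (\<exists>c::real. ((\<lambda>h. ball_avg (\<lambda>y. \<bar>f y - c\<bar>) x h) \<longlongrightarrow> 0) (at_right 0))"

definition rho_rep :: "('a::euclidean_space \<Rightarrow> real) \<Rightarrow> 'a \<Rightarrow> ennreal" where
  "rho_rep f x = (if lebesgue_point f x then ennreal (Lim (at_right 0) (ball_avg f x)) else \<infinity>)"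

definition rho_theta :: "('a::euclidean_space \<Rightarrow> real) \<Rightarrow> real \<Rightarrow> real \<Rightarrow> 'a \<Rightarrow> ennreal" where
  "rho_theta f \<theta>0 p x = (INF \<theta> \<in> {\<theta>0..1}. rho_rep f (\<theta> *\<^sub>R x) * ennreal (\<theta> powr (-p)))"

definition Fp :: "real \<Rightarrow> ('a::euclidean_space \<Rightarrow> 'a) \<Rightarrow> 'a \<Rightarrow> ennreal" where
  "Fp p u h = (\<integral>\<^sup>+ x. ennreal (\<bar>(u (x + h) - u x) \<bullet> (h /\<^sub>R norm h)\<bar> powr p) \<partial>lebesgue)"

definition Lp_vec :: "real \<Rightarrow> ('a::euclidean_space \<Rightarrow> 'a) set" where
  "Lp_vec p = {u. u \<in> borel_measurable lebesgue \<and>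
                  (\<integral>\<^sup>+ x. ennreal (norm (u x) powr p) \<partial>lebesgue) < \<infinity>}"

definition loc_integrable :: "('a::euclidean_space \<Rightarrow> real) \<Rightarrow> bool" where
  "loc_integrable f \<longleftrightarrow> (\<forall>K. compact K \<longrightarrow> set_integrable lebesgue K f)"

definition radial_int :: "('a::euclidean_space \<Rightarrow> real) \<Rightarrow> real \<Rightarrow> real \<Rightarrow> 'a \<Rightarrow> real \<Rightarrow> ennreal" where
  "radial_int f \<theta>0 p v \<delta> =
     (\<integral>\<^sup>+ s \<in> {0<..<\<delta>}. rho_theta f \<theta>0 p (s *\<^sub>R v) * ennreal (s ^ (DIM('a) - 1)) \<partial>lborel)"

end

theory Submission
  imports Defs
begin

(*
  Write Phi(a) for the integral of |(u(x + a v) - u(x)) . v|^p over x (dir_modulus), so that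
  F_p[u](a v) = Phi(a) for a > 0.  Translation invariance and convexity of |.|^p make Phi even and
  quasi-subadditive, Phi(a + b) <= 2^(p-1) (Phi(a) + Phi(b)).  Averaging
  Phi(t) <= 2^(p-1) (Phi(h + t) + Phi(h)) over h in [theta0 s, s - t], after halving t often enough,
  gives for 0 < s, t < delta and tau = (1 - theta0)/2

     tau s^(p+1) Phi(t) <= (8 delta / (1 - theta0))^p * integral of Phi over [theta0 s, s].

  Multiply by rho_theta0(s v) s^(d-1) / s^(p+1), integrate over s in (0, delta) and exchange the
  integrals.  For theta0 s <= h <= s the definition of rho_theta0 gives
  rho_theta0(s v) <= rho(h v) (h/s)^(-p), so the inner integral, over s in [h, h/theta0], is at most a
  constant times rho(h v) h^(d-1) / h^p.

  Neither rho nor rho_theta0 is known to be measurable, so the integral over s is approached by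
  measurable minorants and constants leave integrals only as upper bounds.
*)

lemma nn_integral_cmult_le:
  fixes c :: ennreal
  assumes "c < top"
  shows "(\<integral>\<^sup>+ x. c * f x \<partial>M) \<le> c * integral\<^sup>N M f"
proof (cases "c = 0")
  case True
  then show ?thesis by simp
next
  case False
  show ?thesis
    unfolding nn_integral_def
  proof (rule SUP_least)
    fix g assume g: "g \<in> {g. simple_function M g \<and> g \<le> (\<lambda>x. c * f x)}"
    define g' where "g' = (\<lambda>x. g x / c)"
    have sg': "simple_function M g'" unfolding g'_def
      using g by (auto intro: simple_function_compose1[where g="\<lambda>y. y / c"])
    have g_eq: "g x = c * g' x" for x
      unfolding g'_def using False assms
      by (metis ennreal_times_divide mult.commute mult_divide_eq_ennreal top.not_eq_extremum)
    have "g' \<le> f"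
    proof (rule le_funI)
      fix x
      have "g x \<le> c * f x" using g by (auto simp: le_fun_def)
      then have "g x / c \<le> c * f x / c" by (rule divide_right_mono_ennreal)
      also have "\<dots> = f x" using False assms
        by (metis mult.commute mult_divide_eq_ennreal top.not_eq_extremum)
      finally show "g' x \<le> f x" unfolding g'_def .
    qed
    have "integral\<^sup>S M g = c * integral\<^sup>S M g'"
    proof -
      have "g = (\<lambda>x. c * g' x)" using g_eq by auto
      then show ?thesis using sg' by simp
    qed
    also have "\<dots> \<le> c * (SUP g \<in> {g. simple_function M g \<and> g \<le> f}. integral\<^sup>S M g)"
      using sg' \<open>g' \<le> f\<close> by (intro mult_left_mono SUP_upper) auto
    finally show "integral\<^sup>S M g \<le> c * (SUP g \<in> {g. simple_function M g \<and> g \<le> f}. integral\<^sup>S M g)" .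
  qed
qed

lemma cmult_nn_integral_le_from_measurable_minorants:
  fixes c B :: ennreal
  assumes "\<And>g. g \<in> borel_measurable M \<Longrightarrow> (\<And>x. g x \<le> f x) \<Longrightarrow> c * integral\<^sup>N M g \<le> B"
  shows "c * integral\<^sup>N M f \<le> B"
proof -
  have "c * integral\<^sup>N M f = (SUP g \<in> {g. simple_function M g \<and> g \<le> f}. c * integral\<^sup>S M g)"
    unfolding nn_integral_def by (rule SUP_mult_left_ennreal)
  also have "\<dots> \<le> B"
  proof (rule SUP_least)
    fix g assume "g \<in> {g. simple_function M g \<and> g \<le> f}"
    then have g: "simple_function M g" "\<And>x. g x \<le> f x" by (auto simp: le_fun_def)
    then have "c * integral\<^sup>N M g \<le> B"
      by (intro assms borel_measurable_simple_function)
    with g show "c * integral\<^sup>S M g \<le> B" by (simp add: nn_integral_eq_simple_integral)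
  qed
  finally show ?thesis .
qed

lemma completion_ex_borel_measurable_euclidean:
  fixes u :: "'a \<Rightarrow> 'b::euclidean_space"
  assumes "u \<in> borel_measurable (completion M)"
  shows "\<exists>u'\<in>borel_measurable M. AE x in M. u x = u' x"
proof -
  have "\<exists>g\<in>borel_measurable M. AE x in M. u x \<bullet> b = g x" for b :: 'b
    using assms by (intro completion_ex_borel_measurable_real) simp
  then obtain g where g: "\<And>b. g b \<in> borel_measurable M" "\<And>b. AE x in M. u x \<bullet> b = g b x"
    by metis
  define u' where "u' x = (\<Sum>b\<in>Basis. g b x *\<^sub>R b)" for x
  have "u' \<in> borel_measurable M"
    unfolding u'_def using g(1) by measurable
  moreover have "AE x in M. \<forall>b\<in>Basis. u x \<bullet> b = g b x"
    using g(2) by (intro AE_finite_allI) auto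
  then have "AE x in M. u x = u' x"
  proof eventually_elim
    case (elim x)
    then show "u x = u' x"
      unfolding u'_def by (metis (no_types, lifting) euclidean_representation sum.cong)
  qed
  ultimately show ?thesis by blast
qed

lemma nn_integral_lborel_translate:
  fixes c :: "'a::euclidean_space"
  assumes "f \<in> borel_measurable borel"
  shows "(\<integral>\<^sup>+ x. f (x + c) \<partial>lborel) = (\<integral>\<^sup>+ x. f x \<partial>lborel)"
proof -
  have "(\<integral>\<^sup>+ x. f x \<partial>lborel) = (\<integral>\<^sup>+ x. f x \<partial>distr lborel borel ((+) c))"
    by (simp add: lborel_distr_plus)
  also have "\<dots> = (\<integral>\<^sup>+ x. f (c + x) \<partial>lborel)"
    using assms by (subst nn_integral_distr) auto
  finally show ?thesis by (simp add: add.commute)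
qed

lemma AE_lborel_translate:
  fixes c :: "'a::euclidean_space"
  assumes "AE x in lborel. P x"
  shows "AE x in lborel. P (x + c)"
proof -
  obtain N where N: "\<And>x. x \<in> space lborel - N \<Longrightarrow> P x" "N \<in> null_sets lborel"
    using AE_E3[OF assms] by blast
  have "{x. x - (- c) \<in> N} \<in> null_sets lborel"
    using N(2) by (rule null_sets_translation)
  then show ?thesis
    by (rule AE_I') (use N(1) in auto)
qed

lemma powr_add_le_two_powr:
  fixes a b p :: real
  assumes "0 \<le> a" "0 \<le> b" "1 \<le> p"
  shows "(a + b) powr p \<le> 2 powr (p - 1) * (a powr p + b powr p)"
proof -
  have midpoint: "((a + b) / 2) powr p \<le> (a powr p + b powr p) / 2"
  proof (cases "a = 0 \<or> b = 0")
    case True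
    have "(x / 2) powr p \<le> x powr p / 2" if "0 \<le> x" for x :: real
    proof -
      have "(x / 2) powr p = x powr p / 2 powr p" using that by (simp add: powr_divide)
      also have "\<dots> \<le> x powr p / 2"
        using assms by (intro divide_left_mono) (auto intro: order_trans[OF _ powr_mono[of 1 p 2]])
      finally show ?thesis .
    qed
    with True show ?thesis using assms by auto
  next
    case False
    then have "0 < a" "0 < b" using assms by auto
    then show ?thesis
      using convex_onD[OF powr_convex[OF assms(3)], of "1/2" a b] by (simp add: field_simps)
  qed
  have "(a + b) powr p = 2 powr p * ((a + b) / 2) powr p"
    using assms by (simp add: powr_divide)
  also have "\<dots> \<le> 2 powr p * ((a powr p + b powr p) / 2)"
    by (intro mult_left_mono midpoint) auto
  also have "\<dots> = 2 powr (p - 1) * (a powr p + b powr p)"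
    by (simp add: powr_diff)
  finally show ?thesis .
qed

lemma ennreal_two_powr_diff_one_mult_double:
  "ennreal (2 powr (p - 1)) * (x + x) = ennreal (2 powr p) * x"
proof -
  have "ennreal (2 powr (p - 1)) * 2 = ennreal (2 powr (p - 1) * 2)"
    using ennreal_mult[of "2 powr (p - 1)" 2] by simp
  also have "2 powr (p - 1) * 2 = 2 powr p"
    by (simp add: powr_diff)
  finally have "ennreal (2 powr (p - 1)) * 2 = ennreal (2 powr p)" .
  then show ?thesis by (metis mult.assoc mult_2)
qed

lemma ex_two_power_between:
  fixes x :: real
  assumes "0 < x"
  shows "\<exists>k::nat. x \<le> 2 ^ k \<and> 2 ^ k \<le> max 1 (2 * x)"
proof (cases "x \<le> 1")
  case True
  then show ?thesis by (intro exI[of _ 0]) auto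
next
  case False
  have ex: "\<exists>k::nat. x \<le> 2 ^ k"
    using real_arch_pow[of 2 x] by (auto intro: less_imp_le)
  define k where "k = (LEAST k::nat. x \<le> 2 ^ k)"
  have k: "x \<le> 2 ^ k" unfolding k_def by (rule LeastI_ex[OF ex])
  with False obtain j where j: "k = Suc j" by (cases k) auto
  have "\<not> x \<le> 2 ^ j"
    using not_less_Least[of j "\<lambda>k. x \<le> 2 ^ k"] j k_def by auto
  with j k show ?thesis by (intro exI[of _ k]) auto
qed

lemma ex_dyadic_rescaling:
  fixes \<tau> s t \<delta> :: real
  assumes \<tau>: "0 < \<tau>" "\<tau> < 1" and s: "0 < s" "s < \<delta>" and t: "0 < t" "t < \<delta>"
  shows "\<exists>k::nat. t \<le> 2 ^ k * (\<tau> * s) \<and> 2 ^ k * s \<le> 2 * \<delta> / \<tau>"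
proof -
  obtain k :: nat where k: "t / (\<tau> * s) \<le> 2 ^ k" "2 ^ k \<le> max 1 (2 * (t / (\<tau> * s)))"
    using ex_two_power_between[of "t / (\<tau> * s)"] t s \<tau> by auto
  have "t \<le> 2 ^ k * (\<tau> * s)"
    using k(1) s \<tau> by (simp add: field_simps)
  moreover have "2 ^ k * s \<le> 2 * \<delta> / \<tau>"
  proof (cases "2 ^ k \<le> (1::real)")
    case True
    then have "2 ^ k * s \<le> s" using s by (simp add: mult_le_cancel_right1)
    also have "\<dots> \<le> 2 * \<delta> / \<tau>"
    proof -
      have "\<tau> * s \<le> 1 * s" using s \<tau> by (intro mult_right_mono) auto
      then have "\<tau> * s \<le> 2 * \<delta>" using s by linarith
      then show ?thesis using \<tau> by (simp add: field_simps)
    qed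
    finally show ?thesis .
  next
    case False
    with k(2) have "2 ^ k \<le> 2 * (t / (\<tau> * s))" by auto
    then have "2 ^ k * s \<le> 2 * t / \<tau>" using s \<tau> by (simp add: field_simps)
    also have "\<dots> \<le> 2 * \<delta> / \<tau>" using t \<tau> by (simp add: divide_right_mono)
    finally show ?thesis .
  qed
  ultimately show ?thesis by blast
qed

definition dir_modulus :: "real \<Rightarrow> ('a::euclidean_space \<Rightarrow> 'a) \<Rightarrow> 'a \<Rightarrow> real \<Rightarrow> ennreal" where
  "dir_modulus p u v a = (\<integral>\<^sup>+x. ennreal (\<bar>(u (x + a *\<^sub>R v) - u x) \<bullet> v\<bar> powr p) \<partial>lborel)"

lemma Fp_eq_dir_modulus:
  assumes "AE x in lborel. u x = u' x" and "norm v = 1" and "0 < a"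
  shows "Fp p u (a *\<^sub>R v) = dir_modulus p u' v a"
proof -
  have "(a *\<^sub>R v) /\<^sub>R norm (a *\<^sub>R v) = v"
    using assms by simp
  then have "Fp p u (a *\<^sub>R v) = (\<integral>\<^sup>+x. ennreal (\<bar>(u (x + a *\<^sub>R v) - u x) \<bullet> v\<bar> powr p) \<partial>lborel)"
    unfolding Fp_def nn_integral_completion by simp
  also have "\<dots> = dir_modulus p u' v a"
    unfolding dir_modulus_def using assms(1) AE_lborel_translate[OF assms(1), of "a *\<^sub>R v"]
    by (intro nn_integral_cong_AE) auto
  finally show ?thesis .
qed

context
  fixes u :: "'a::euclidean_space \<Rightarrow> 'a"
  assumes u [measurable]: "u \<in> borel_measurable lborel"
begin

lemma borel_measurable_dir_modulus [measurable]: "dir_modulus p u v \<in> borel_measurable lborel"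
proof -
  have "(\<lambda>(a, x). ennreal (\<bar>(u (x + a *\<^sub>R v) - u x) \<bullet> v\<bar> powr p)) \<in> borel_measurable (lborel \<Otimes>\<^sub>M lborel)"
    by measurable
  then show ?thesis
    unfolding dir_modulus_def[abs_def] by (rule lborel.borel_measurable_nn_integral)
qed

lemma dir_modulus_uminus: "dir_modulus p u v (- a) = dir_modulus p u v a"
proof -
  let ?g = "\<lambda>x. ennreal (\<bar>(u (x - a *\<^sub>R v) - u x) \<bullet> v\<bar> powr p)"
  have "(\<integral>\<^sup>+x. ?g (x + a *\<^sub>R v) \<partial>lborel) = (\<integral>\<^sup>+x. ?g x \<partial>lborel)"
    by (rule nn_integral_lborel_translate) measurable
  moreover have "\<bar>(u x - u (x + a *\<^sub>R v)) \<bullet> v\<bar> = \<bar>(u (x + a *\<^sub>R v) - u x) \<bullet> v\<bar>" for x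
    by (metis abs_minus_commute inner_diff_left)
  ultimately show ?thesis
    unfolding dir_modulus_def by simp
qed

lemma dir_modulus_add_le:
  assumes "1 \<le> p"
  shows "dir_modulus p u v (a + b) \<le> ennreal (2 powr (p - 1)) * (dir_modulus p u v a + dir_modulus p u v b)"
proof -
  let ?f = "\<lambda>c x. \<bar>(u (x + c *\<^sub>R v) - u x) \<bullet> v\<bar> powr p"
  let ?g = "\<lambda>x. \<bar>(u (x + (a + b) *\<^sub>R v) - u (x + a *\<^sub>R v)) \<bullet> v\<bar> powr p"
  have shifted: "(\<integral>\<^sup>+x. ennreal (?g x) \<partial>lborel) = dir_modulus p u v b"
  proof -
    have "(\<integral>\<^sup>+x. ennreal (?f b (x + a *\<^sub>R v)) \<partial>lborel) = (\<integral>\<^sup>+x. ennreal (?f b x) \<partial>lborel)"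
      by (rule nn_integral_lborel_translate) measurable
    moreover have "x + a *\<^sub>R v + b *\<^sub>R v = x + (a + b) *\<^sub>R v" for x
      by (simp add: scaleR_add_left)
    ultimately show ?thesis
      unfolding dir_modulus_def by simp
  qed
  have pointwise: "ennreal (?f (a + b) x) \<le> ennreal (2 powr (p - 1)) * (ennreal (?g x) + ennreal (?f a x))" for x
  proof -
    let ?y = "(u (x + (a + b) *\<^sub>R v) - u (x + a *\<^sub>R v)) \<bullet> v"
    let ?z = "(u (x + a *\<^sub>R v) - u x) \<bullet> v"
    have "?f (a + b) x = \<bar>?y + ?z\<bar> powr p"
      by (simp add: inner_diff_left)
    also have "\<dots> \<le> (\<bar>?y\<bar> + \<bar>?z\<bar>) powr p"
      using assms by (intro powr_mono2) auto
    also have "\<dots> \<le> 2 powr (p - 1) * (?g x + ?f a x)"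
      using assms by (intro powr_add_le_two_powr) auto
    finally have "?f (a + b) x \<le> 2 powr (p - 1) * (?g x + ?f a x)" .
    from ennreal_leI[OF this] show ?thesis
      by (simp add: ennreal_mult ennreal_plus)
  qed
  have "dir_modulus p u v (a + b)
      \<le> (\<integral>\<^sup>+x. ennreal (2 powr (p - 1)) * (ennreal (?g x) + ennreal (?f a x)) \<partial>lborel)"
    unfolding dir_modulus_def by (intro nn_integral_mono pointwise)
  also have "\<dots> = ennreal (2 powr (p - 1)) * (dir_modulus p u v b + dir_modulus p u v a)"
    unfolding shifted[symmetric] unfolding dir_modulus_def
    by (simp add: nn_integral_cmult nn_integral_add)
  finally show ?thesis
    by (simp add: add.commute)
qed

lemma dir_modulus_two_power_le:
  assumes "1 \<le> p"
  shows "dir_modulus p u v (2 ^ k * a) \<le> ennreal ((2 ^ k) powr p) * dir_modulus p u v a"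
proof (induction k)
  case 0
  then show ?case by simp
next
  case (Suc k)
  let ?P = "dir_modulus p u v"
  have "(2::real) ^ Suc k * a = 2 ^ k * a + 2 ^ k * a"
    by simp
  then have "?P (2 ^ Suc k * a) = ?P (2 ^ k * a + 2 ^ k * a)"
    by (rule arg_cong)
  also have "\<dots> \<le> ennreal (2 powr (p - 1)) * (?P (2 ^ k * a) + ?P (2 ^ k * a))"
    using assms by (rule dir_modulus_add_le)
  also have "\<dots> = ennreal (2 powr p) * ?P (2 ^ k * a)"
    by (rule ennreal_two_powr_diff_one_mult_double)
  also have "\<dots> \<le> ennreal (2 powr p) * (ennreal ((2 ^ k) powr p) * ?P a)"
    by (intro mult_left_mono Suc.IH) auto
  also have "\<dots> = ennreal ((2 ^ Suc k) powr p) * ?P a"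
    by (simp add: mult.assoc[symmetric] ennreal_mult[symmetric] powr_mult[symmetric] del: ennreal_mult)
  finally show ?case .
qed

lemma dir_modulus_average_le:
  assumes p: "1 \<le> p" and t: "0 \<le> t" "a + t \<le> b"
  shows "ennreal (b - t - a) * dir_modulus p u v t
     \<le> ennreal (2 powr p) * (\<integral>\<^sup>+h. dir_modulus p u v h * indicator {a..b} h \<partial>lborel)"
proof -
  let ?P = "dir_modulus p u v"
  let ?J = "\<integral>\<^sup>+h. ?P h * indicator {a..b} h \<partial>lborel"
  define A where "A = {a..b - t}"
  have split: "?P t \<le> ennreal (2 powr (p - 1)) * (?P (h + t) + ?P h)" for h
    using dir_modulus_add_le[OF p, where a = "h + t" and b = "- h"] by (simp add: dir_modulus_uminus)
  have shifted: "(\<integral>\<^sup>+h. ?P (h + t) * indicator A h \<partial>lborel) \<le> ?J"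
  proof -
    have "(\<integral>\<^sup>+h. ?P (h + t) * indicator A h \<partial>lborel) = (\<integral>\<^sup>+h. ?P h * indicator A (h - t) \<partial>lborel)"
      using nn_integral_lborel_translate[of "\<lambda>h. ?P h * indicator A (h - t)" t] by (simp add: A_def)
    also have "\<dots> \<le> ?J"
      using t by (intro nn_integral_mono) (auto simp: A_def indicator_def)
    finally show ?thesis .
  qed
  have unshifted: "(\<integral>\<^sup>+h. ?P h * indicator A h \<partial>lborel) \<le> ?J"
    using t by (intro nn_integral_mono) (auto simp: A_def indicator_def)
  have "ennreal (b - t - a) * ?P t = (\<integral>\<^sup>+h. ?P t * indicator A h \<partial>lborel)"
    using t by (simp add: A_def nn_integral_cmult_indicator mult.commute)
  also have "\<dots> \<le> (\<integral>\<^sup>+h. ennreal (2 powr (p - 1)) * (?P (h + t) * indicator A h + ?P h * indicator A h) \<partial>lborel)"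
    by (intro nn_integral_mono) (auto simp: indicator_def split)
  also have "\<dots> = ennreal (2 powr (p - 1)) *
      ((\<integral>\<^sup>+h. ?P (h + t) * indicator A h \<partial>lborel) + (\<integral>\<^sup>+h. ?P h * indicator A h \<partial>lborel))"
    by (simp add: A_def nn_integral_cmult nn_integral_add)
  also have "\<dots> \<le> ennreal (2 powr (p - 1)) * (?J + ?J)"
    using shifted unshifted by (intro mult_left_mono add_mono) auto
  also have "\<dots> = ennreal (2 powr p) * ?J"
    by (rule ennreal_two_powr_diff_one_mult_double)
  finally show ?thesis .
qed

lemma dir_modulus_le_local_average:
  assumes p: "1 \<le> p" and \<theta>0: "0 < \<theta>0" "\<theta>0 < 1" and s: "0 < s" "s < \<delta>" and t: "0 < t" "t < \<delta>"
  shows "ennreal ((1 - \<theta>0) / 2 * s powr (p + 1)) * dir_modulus p u v t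
     \<le> ennreal ((8 * \<delta> / (1 - \<theta>0)) powr p) * (\<integral>\<^sup>+h. dir_modulus p u v h * indicator {\<theta>0 * s..s} h \<partial>lborel)"
proof -
  define \<tau> where "\<tau> = (1 - \<theta>0) / 2"
  have \<tau>: "0 < \<tau>" "\<tau> < 1" using \<theta>0 by (auto simp: \<tau>_def)
  let ?P = "dir_modulus p u v"
  let ?J = "\<integral>\<^sup>+h. ?P h * indicator {\<theta>0 * s..s} h \<partial>lborel"
  obtain k :: nat where k: "t \<le> 2 ^ k * (\<tau> * s)" "2 ^ k * s \<le> 2 * \<delta> / \<tau>"
    using ex_dyadic_rescaling[OF \<tau> s t] by blast
  define t' where "t' = t / 2 ^ k"
  have t_eq: "t = 2 ^ k * t'" by (simp add: t'_def)
  have t': "0 < t'" "t' \<le> \<tau> * s"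
    using t k(1) by (auto simp: t'_def field_simps)
  have "2 * (2 * \<delta> / \<tau>) = 8 * \<delta> / (1 - \<theta>0)"
    by (simp add: \<tau>_def field_simps)
  with k(2) have scale: "2 * 2 ^ k * s \<le> 8 * \<delta> / (1 - \<theta>0)"
    by linarith
  have average: "ennreal (\<tau> * s) * ?P t' \<le> ennreal (2 powr p) * ?J"
  proof -
    have "ennreal (\<tau> * s) * ?P t' \<le> ennreal (s - t' - \<theta>0 * s) * ?P t'"
      using t' by (intro mult_right_mono ennreal_leI) (auto simp: \<tau>_def field_simps)
    also have "\<dots> \<le> ennreal (2 powr p) * ?J"
      by (rule dir_modulus_average_le[OF p]) (use t' \<tau> in \<open>auto simp: \<tau>_def field_simps\<close>)
    finally show ?thesis .
  qed
  have "ennreal (\<tau> * s powr (p + 1)) * ?P t = ennreal (s powr p) * (ennreal (\<tau> * s) * ?P t)"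
    using s \<tau> by (simp add: powr_add ennreal_mult mult_ac)
  also have "\<dots> \<le> ennreal (s powr p) * (ennreal (\<tau> * s) * (ennreal ((2 ^ k) powr p) * ?P t'))"
    unfolding t_eq by (intro mult_left_mono dir_modulus_two_power_le[OF p]) auto
  also have "\<dots> = ennreal ((2 ^ k * s) powr p) * (ennreal (\<tau> * s) * ?P t')"
    using s by (simp add: powr_mult ennreal_mult mult_ac)
  also have "\<dots> \<le> ennreal ((2 ^ k * s) powr p) * (ennreal (2 powr p) * ?J)"
    using average by (rule mult_left_mono) simp
  also have "\<dots> = ennreal ((2 * 2 ^ k * s) powr p) * ?J"
    using s by (simp add: powr_mult ennreal_mult mult_ac)
  also have "\<dots> \<le> ennreal ((8 * \<delta> / (1 - \<theta>0)) powr p) * ?J"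
    using scale s p by (intro mult_right_mono ennreal_leI powr_mono2) auto
  finally show ?thesis by (simp add: \<tau>_def)
qed


lemma dir_modulus_le_scaled_local_average:
  assumes p: "1 \<le> p" and \<theta>0: "0 < \<theta>0" "\<theta>0 < 1" and s: "0 < s" "s < \<delta>" and t: "0 < t" "t < \<delta>"
  shows "dir_modulus p u v t
     \<le> ennreal (2 / (1 - \<theta>0) * (8 * \<delta> / (1 - \<theta>0)) powr p) * ennreal (s powr - (p + 1)) *
       (\<integral>\<^sup>+h. dir_modulus p u v h * indicator {\<theta>0 * s..s} h \<partial>lborel)"
proof -
  let ?J = "\<integral>\<^sup>+h. dir_modulus p u v h * indicator {\<theta>0 * s..s} h \<partial>lborel"
  define a where "a = (1 - \<theta>0) / 2 * s powr (p + 1)"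
  have a: "0 < a" using \<theta>0 s by (simp add: a_def)
  have "ennreal (1 / a) * ennreal a = 1"
    using a by (simp flip: ennreal_mult)
  then have "dir_modulus p u v t = ennreal (1 / a) * (ennreal a * dir_modulus p u v t)"
    by (simp add: mult.assoc[symmetric])
  also have "\<dots> \<le> ennreal (1 / a) * (ennreal ((8 * \<delta> / (1 - \<theta>0)) powr p) * ?J)"
    unfolding a_def by (intro mult_left_mono dir_modulus_le_local_average[OF p \<theta>0 s t]) auto
  also have "\<dots> = ennreal (1 / a) * ennreal ((8 * \<delta> / (1 - \<theta>0)) powr p) * ?J"
    by (simp only: mult.assoc)
  also have "ennreal (1 / a) * ennreal ((8 * \<delta> / (1 - \<theta>0)) powr p) = ennreal (1 / a * (8 * \<delta> / (1 - \<theta>0)) powr p)"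
    using a by (intro ennreal_mult[symmetric]) auto
  also have "1 / a * (8 * \<delta> / (1 - \<theta>0)) powr p = 2 / (1 - \<theta>0) * (8 * \<delta> / (1 - \<theta>0)) powr p * s powr - (p + 1)"
    unfolding a_def powr_minus_divide using \<theta>0 s by (simp add: field_simps)
  also have "ennreal \<dots> = ennreal (2 / (1 - \<theta>0) * (8 * \<delta> / (1 - \<theta>0)) powr p) * ennreal (s powr - (p + 1))"
    using \<theta>0 by (intro ennreal_mult) auto
  finally show ?thesis .
qed

end

lemma rho_theta_le_rho_rep:
  assumes "0 < s" "\<theta>0 * s \<le> h" "h \<le> s"
  shows "rho_theta \<rho> \<theta>0 p (s *\<^sub>R v) \<le> rho_rep \<rho> (h *\<^sub>R v) * ennreal ((h / s) powr (- p))"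
proof -
  have "rho_theta \<rho> \<theta>0 p (s *\<^sub>R v) \<le> rho_rep \<rho> ((h / s) *\<^sub>R (s *\<^sub>R v)) * ennreal ((h / s) powr (- p))"
    unfolding rho_theta_def using assms by (intro INF_lower) (auto simp: field_simps)
  then show ?thesis
    using assms by simp
qed

lemma radial_weight_le:
  fixes h s \<theta>0 p :: real and d :: nat
  assumes "0 < \<theta>0" "0 < h" "h \<le> s" "\<theta>0 * s \<le> h"
  shows "(h / s) powr (- p) * s ^ d * s powr (- (p + 1)) \<le> h powr (- p) * (h / \<theta>0) ^ d / h"
proof -
  have s: "0 < s" using assms by auto
  have "(h / s) powr (- p) * s ^ d * s powr (- (p + 1)) = h powr (- p) * s ^ d * (s powr p * s powr (- (p + 1)))"
    using assms s by (simp add: powr_divide powr_minus divide_simps)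
  also have "s powr p * s powr (- (p + 1)) = 1 / s"
    using s by (simp add: powr_add[symmetric] powr_minus_divide)
  also have "h powr (- p) * s ^ d * (1 / s) \<le> h powr (- p) * (h / \<theta>0) ^ d * (1 / h)"
  proof (intro mult_mono)
    show "s ^ d \<le> (h / \<theta>0) ^ d" using assms by (intro power_mono) (auto simp: field_simps)
    show "1 / s \<le> 1 / h" using assms by (intro divide_left_mono) auto
  qed (use assms s in auto)
  finally show ?thesis by simp
qed

lemma minorant_kernel_le:
  fixes \<rho> :: "'a::euclidean_space \<Rightarrow> real" and d :: nat
  assumes \<theta>0: "0 < \<theta>0" and h: "0 < h"
    and g_le: "\<And>s. 0 < s \<Longrightarrow> g s \<le> rho_theta \<rho> \<theta>0 p (s *\<^sub>R v) * ennreal (s ^ d)"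
  shows "g s * ennreal (s powr - (p + 1)) * indicator {\<theta>0 * s..s} h
    \<le> rho_rep \<rho> (h *\<^sub>R v) * ennreal (h powr (- p) * (h / \<theta>0) ^ d / h) * indicator {h..h / \<theta>0} s"
proof (cases "\<theta>0 * s \<le> h \<and> h \<le> s")
  case False
  then show ?thesis by (simp add: indicator_def)
next
  case True
  then have s: "0 < s" using h by linarith
  let ?r = "rho_rep \<rho> (h *\<^sub>R v)"
  have "g s * ennreal (s powr - (p + 1)) \<le> rho_theta \<rho> \<theta>0 p (s *\<^sub>R v) * ennreal (s ^ d) * ennreal (s powr - (p + 1))"
    using s by (intro mult_right_mono g_le) auto
  also have "\<dots> \<le> ?r * ennreal ((h / s) powr (- p)) * ennreal (s ^ d) * ennreal (s powr - (p + 1))"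
    using True s by (intro mult_right_mono rho_theta_le_rho_rep) auto
  also have "\<dots> = ?r * ennreal ((h / s) powr (- p) * s ^ d * s powr (- (p + 1)))"
    using s by (simp add: ennreal_mult mult.assoc)
  also have "\<dots> \<le> ?r * ennreal (h powr (- p) * (h / \<theta>0) ^ d / h)"
    using True by (intro mult_left_mono ennreal_leI radial_weight_le[OF \<theta>0 h]) auto
  finally show ?thesis
    using True \<theta>0 by (simp add: indicator_def field_simps)
qed

lemma minorant_kernel_integral_le:
  fixes \<rho> :: "'a::euclidean_space \<Rightarrow> real" and d :: nat
  assumes \<theta>0: "0 < \<theta>0" "\<theta>0 < 1"
    and g_le: "\<And>s. 0 < s \<Longrightarrow> g s \<le> rho_theta \<rho> \<theta>0 p (s *\<^sub>R v) * ennreal (s ^ d)"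
    and g_nonpos: "\<And>s. s \<le> 0 \<Longrightarrow> g s = 0"
  shows "(\<integral>\<^sup>+s. g s * ennreal (s powr - (p + 1)) * indicator {\<theta>0 * s..s} h \<partial>lborel)
     \<le> ennreal ((1 / \<theta>0 - 1) * (1 / \<theta>0) ^ d) * rho_rep \<rho> (h *\<^sub>R v) * ennreal (h ^ d / h powr p) *
       indicator {0<..} h"
proof (cases "0 < h")
  case False
  have zero: "g s * ennreal (s powr - (p + 1)) * indicator {\<theta>0 * s..s} h = 0" for s
  proof (cases "\<theta>0 * s \<le> h \<and> h \<le> s")
    case True
    then have "\<theta>0 * s \<le> 0" using False by linarith
    then have "s \<le> 0" using \<theta>0 by (simp add: mult_le_0_iff)
    then show ?thesis by (simp add: g_nonpos)
  qed (simp add: indicator_def)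
  show ?thesis
    by (simp only: zero) simp
next
  case h: True
  define M where "M = h powr (- p) * (h / \<theta>0) ^ d / h"
  let ?r = "rho_rep \<rho> (h *\<^sub>R v)"
  have "(\<integral>\<^sup>+s. g s * ennreal (s powr - (p + 1)) * indicator {\<theta>0 * s..s} h \<partial>lborel)
      \<le> (\<integral>\<^sup>+s. ?r * ennreal M * indicator {h..h / \<theta>0} s \<partial>lborel)"
    unfolding M_def by (intro nn_integral_mono minorant_kernel_le[OF \<theta>0(1) h g_le])
  also have "\<dots> = ?r * ennreal M * ennreal (h / \<theta>0 - h)"
    using h \<theta>0 by (simp add: nn_integral_cmult_indicator le_divide_eq)
  also have "\<dots> = ennreal ((1 / \<theta>0 - 1) * (1 / \<theta>0) ^ d) * ?r * ennreal (h ^ d / h powr p)"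
  proof -
    have "M * (h / \<theta>0 - h) = (1 / \<theta>0 - 1) * (1 / \<theta>0) ^ d * (h ^ d / h powr p)"
      using h \<theta>0 unfolding M_def by (simp add: powr_minus field_simps power_divide)
    moreover have "0 \<le> M" "0 \<le> h / \<theta>0 - h" "0 \<le> (1 / \<theta>0 - 1) * (1 / \<theta>0) ^ d" "0 \<le> h ^ d / h powr p"
      using h \<theta>0 by (auto simp: M_def le_divide_eq)
    ultimately have "ennreal M * ennreal (h / \<theta>0 - h) = ennreal ((1 / \<theta>0 - 1) * (1 / \<theta>0) ^ d) * ennreal (h ^ d / h powr p)"
      by (simp flip: ennreal_mult)
    then show ?thesis
      by (metis mult.assoc mult.commute)
  qed
  finally show ?thesis
    using h by simp
qed

lemma dir_modulus_mult_radial_minorant_le: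
  fixes u :: "'a::euclidean_space \<Rightarrow> 'a" and \<rho> :: "'a \<Rightarrow> real" and d :: nat
  assumes u [measurable]: "u \<in> borel_measurable lborel"
    and p: "1 \<le> p" and \<theta>0: "0 < \<theta>0" "\<theta>0 < 1" and t: "0 < t" "t < \<delta>"
    and g [measurable]: "g \<in> borel_measurable lborel"
    and g_le: "\<And>s. g s \<le> rho_theta \<rho> \<theta>0 p (s *\<^sub>R v) * ennreal (s ^ d) * indicator {0<..<\<delta>} s"
  shows "dir_modulus p u v t * integral\<^sup>N lborel g
    \<le> ennreal ((8 / (1 - \<theta>0)) powr p * ((1 / \<theta>0 - 1) * (1 / \<theta>0) ^ d) * (2 / (1 - \<theta>0)) * \<delta> powr p) *
      (\<integral>\<^sup>+h\<in>{0<..}. rho_rep \<rho> (h *\<^sub>R v) * ennreal (h ^ d / h powr p) * dir_modulus p u v h \<partial>lborel)"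
proof -
  let ?P = "dir_modulus p u v"
  define K where "K = 2 / (1 - \<theta>0) * (8 * \<delta> / (1 - \<theta>0)) powr p"
  define c where "c = (1 / \<theta>0 - 1) * (1 / \<theta>0) ^ d"
  define G where "G s h = ennreal K * g s * ennreal (s powr - (p + 1)) * (?P h * indicator {\<theta>0 * s..s} h)" for s h
  have g0: "g s = 0" if "s \<notin> {0<..<\<delta>}" for s
    using g_le[of s] that by simp
  have average: "?P t * g s \<le> (\<integral>\<^sup>+h. G s h \<partial>lborel)" for s
  proof (cases "s \<in> {0<..<\<delta>}")
    case False
    then show ?thesis by (simp add: g0)
  next
    case True
    have "?P t * g s = g s * ?P t"
      by (simp add: mult_ac)
    also have "\<dots> \<le> g s * (ennreal K * ennreal (s powr - (p + 1)) * (\<integral>\<^sup>+h. ?P h * indicator {\<theta>0 * s..s} h \<partial>lborel))"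
      using True unfolding K_def by (intro mult_left_mono dir_modulus_le_scaled_local_average[OF u p \<theta>0 _ _ t]) auto
    also have "\<dots> = (\<integral>\<^sup>+h. G s h \<partial>lborel)"
      unfolding G_def by (subst nn_integral_cmult) (auto simp: mult_ac)
    finally show ?thesis .
  qed
  have kernel: "(\<integral>\<^sup>+s. G s h \<partial>lborel)
      \<le> ennreal (K * c) * (rho_rep \<rho> (h *\<^sub>R v) * ennreal (h ^ d / h powr p) * ?P h * indicator {0<..} h)" for h
  proof -
    have "(\<integral>\<^sup>+s. G s h \<partial>lborel)
        = ennreal K * ?P h * (\<integral>\<^sup>+s. g s * ennreal (s powr - (p + 1)) * indicator {\<theta>0 * s..s} h \<partial>lborel)"
      unfolding G_def by (subst nn_integral_cmult[symmetric]) (auto simp: indicator_def mult_ac)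
    also have "\<dots> \<le> ennreal K * ?P h *
        (ennreal c * rho_rep \<rho> (h *\<^sub>R v) * ennreal (h ^ d / h powr p) * indicator {0<..} h)"
      unfolding c_def
    proof (intro mult_left_mono minorant_kernel_integral_le[OF \<theta>0])
      show "g s \<le> rho_theta \<rho> \<theta>0 p (s *\<^sub>R v) * ennreal (s ^ d)" for s
        using g_le[of s] by (cases "s \<in> {0<..<\<delta>}") auto
    qed (auto simp: g0)
    also have "\<dots> = ennreal K * ennreal c * (rho_rep \<rho> (h *\<^sub>R v) * ennreal (h ^ d / h powr p) * ?P h * indicator {0<..} h)"
      by (simp add: mult_ac)
    also have "ennreal K * ennreal c = ennreal (K * c)"
      using \<theta>0 by (intro ennreal_mult[symmetric]) (auto simp: K_def c_def)
    finally show ?thesis .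
  qed
  have "?P t * integral\<^sup>N lborel g = (\<integral>\<^sup>+s. ?P t * g s \<partial>lborel)"
    by (simp add: nn_integral_cmult)
  also have "\<dots> \<le> (\<integral>\<^sup>+s. \<integral>\<^sup>+h. G s h \<partial>lborel \<partial>lborel)"
    by (intro nn_integral_mono average)
  also have "\<dots> = (\<integral>\<^sup>+h. \<integral>\<^sup>+s. G s h \<partial>lborel \<partial>lborel)"
    by (rule lborel_pair.Fubini') (unfold G_def indicator_def atLeastAtMost_iff, measurable)
  also have "\<dots> \<le> (\<integral>\<^sup>+h. ennreal (K * c) *
      (rho_rep \<rho> (h *\<^sub>R v) * ennreal (h ^ d / h powr p) * ?P h * indicator {0<..} h) \<partial>lborel)"
    by (intro nn_integral_mono kernel)
  also have "\<dots> \<le> ennreal (K * c) *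
      (\<integral>\<^sup>+h\<in>{0<..}. rho_rep \<rho> (h *\<^sub>R v) * ennreal (h ^ d / h powr p) * ?P h \<partial>lborel)"
    by (rule nn_integral_cmult_le) simp
  also have "K * c = (8 / (1 - \<theta>0)) powr p * ((1 / \<theta>0 - 1) * (1 / \<theta>0) ^ d) * (2 / (1 - \<theta>0)) * \<delta> powr p"
    using \<theta>0 t by (simp add: K_def c_def powr_mult[symmetric] field_simps)
  finally show ?thesis .
qed

lemma Fp_le_radial_integral:
  fixes \<rho> :: "'a::euclidean_space \<Rightarrow> real" and u :: "'a \<Rightarrow> 'a"
  assumes p: "1 \<le> p" and \<theta>0: "0 < \<theta>0" "\<theta>0 < 1" and t: "0 < t" "t < \<delta>" and v: "v \<in> sphere 0 1"
    and u: "u \<in> Lp_vec p" and R: "0 < radial_int \<rho> \<theta>0 p v \<delta>" "radial_int \<rho> \<theta>0 p v \<delta> < \<infinity>"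
  shows "Fp p u (t *\<^sub>R v) \<le>
    ennreal ((8 / (1 - \<theta>0)) powr p * ((1 / \<theta>0 - 1) * (1 / \<theta>0) ^ (DIM('a) - 1)) * (2 / (1 - \<theta>0))) *
    ennreal (\<delta> powr p) / radial_int \<rho> \<theta>0 p v \<delta> *
    (\<integral>\<^sup>+ h \<in> {0<..}. rho_rep \<rho> (h *\<^sub>R v) * ennreal (h ^ (DIM('a) - 1)) *
       Fp p u (h *\<^sub>R v) / ennreal (h powr p) \<partial>lborel)"
    (is "_ \<le> ennreal ?C * _ / ?R * ?I")
proof -
  let ?d = "DIM('a) - 1"
  obtain w where w [measurable]: "w \<in> borel_measurable lborel" and ae: "AE x in lborel. u x = w x"
    using completion_ex_borel_measurable_euclidean[of u lborel] u by (auto simp: Lp_vec_def)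
  let ?P = "dir_modulus p w v"
  have Fp_eq: "Fp p u (h *\<^sub>R v) = ?P h" if "0 < h" for h
    using Fp_eq_dir_modulus[OF ae] v that by simp
  have I_eq: "?I = (\<integral>\<^sup>+h\<in>{0<..}. rho_rep \<rho> (h *\<^sub>R v) * ennreal (h ^ ?d / h powr p) * ?P h \<partial>lborel)"
  proof (intro nn_integral_cong)
    fix h :: real
    show "rho_rep \<rho> (h *\<^sub>R v) * ennreal (h ^ ?d) * Fp p u (h *\<^sub>R v) / ennreal (h powr p) * indicator {0<..} h
        = rho_rep \<rho> (h *\<^sub>R v) * ennreal (h ^ ?d / h powr p) * ?P h * indicator {0<..} h"
      by (cases "0 < h") (simp_all add: Fp_eq divide_ennreal[symmetric] ennreal_times_divide mult_ac)
  qed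
  have C: "0 \<le> ?C" using \<theta>0 by auto
  have main: "?P t * ?R \<le> ennreal (?C * \<delta> powr p) * ?I"
    unfolding radial_int_def I_eq
    by (rule cmult_nn_integral_le_from_measurable_minorants,
        rule dir_modulus_mult_radial_minorant_le[OF w p \<theta>0 t]) auto
  have "Fp p u (t *\<^sub>R v) = ?P t * ?R / ?R"
    using Fp_eq t R by (simp add: ennreal_mult_divide_eq)
  also have "\<dots> \<le> ennreal (?C * \<delta> powr p) * ?I / ?R"
    by (rule divide_right_mono_ennreal[OF main])
  also have "\<dots> = ennreal ?C * ennreal (\<delta> powr p) * ?I / ?R"
    by (simp only: ennreal_mult[OF C powr_ge_zero])
  also have "\<dots> = ennreal ?C * ennreal (\<delta> powr p) / ?R * ?I"
    using ennreal_times_divide[of ?I "ennreal ?C * ennreal (\<delta> powr p)" ?R] by (simp only: mult.commute)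
  finally show ?thesis .
qed

theorem lemma2p1:
  fixes p \<theta>0 :: real
  assumes "1 \<le> p" and "0 < \<theta>0" and "\<theta>0 < 1"
  shows "\<exists>C::real. C > 0 \<and>
    (\<forall>(\<rho> :: 'a::euclidean_space \<Rightarrow> real) \<Lambda> v0.
       loc_integrable \<rho> \<and> (\<forall>x. 0 \<le> \<rho> x) \<and>
       \<Lambda> \<subseteq> sphere 0 1 \<and> hausdorff_measure (DIM('a) - 1) \<Lambda> > 0 \<and> v0 \<in> \<Lambda> \<and>
       (\<forall>v\<in>\<Lambda>. \<forall>r>0. rho_theta \<rho> \<theta>0 p (r *\<^sub>R v) = rho_theta \<rho> \<theta>0 p (r *\<^sub>R v0)) \<and>
       ((\<lambda>\<delta>. ennreal (\<delta> powr p) / radial_int \<rho> \<theta>0 p v0 \<delta>) \<longlongrightarrow> 0) (at_right 0)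
     \<longrightarrow>
       (\<forall>\<delta>>0. \<forall>v\<in>sphere 0 1. \<forall>t. 0 < t \<and> t < \<delta> \<longrightarrow> (\<forall>u\<in>Lp_vec p.
          0 < radial_int \<rho> \<theta>0 p v \<delta> \<and> radial_int \<rho> \<theta>0 p v \<delta> < \<infinity> \<longrightarrow>
          Fp p u (t *\<^sub>R v) \<le>
            ennreal C * ennreal (\<delta> powr p) / radial_int \<rho> \<theta>0 p v \<delta> *
            (\<integral>\<^sup>+ h \<in> {0<..}. rho_rep \<rho> (h *\<^sub>R v) * ennreal (h ^ (DIM('a) - 1)) *
                 Fp p u (h *\<^sub>R v) / ennreal (h powr p) \<partial>lborel))))"
proof -
  define C where "C = (8 / (1 - \<theta>0)) powr p * ((1 / \<theta>0 - 1) * (1 / \<theta>0) ^ (DIM('a) - 1)) * (2 / (1 - \<theta>0))"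
  have "C > 0"
    using assms by (simp add: C_def)
  moreover have "Fp p u (t *\<^sub>R v) \<le> ennreal C * ennreal (\<delta> powr p) / radial_int \<rho> \<theta>0 p v \<delta> *
      (\<integral>\<^sup>+ h \<in> {0<..}. rho_rep \<rho> (h *\<^sub>R v) * ennreal (h ^ (DIM('a) - 1)) *
         Fp p u (h *\<^sub>R v) / ennreal (h powr p) \<partial>lborel)"
    if "0 < t" "t < \<delta>" "v \<in> sphere 0 1" "u \<in> Lp_vec p"
      "0 < radial_int \<rho> \<theta>0 p v \<delta>" "radial_int \<rho> \<theta>0 p v \<delta> < \<infinity>"
    for \<rho> :: "'a \<Rightarrow> real" and t \<delta> v u
    unfolding C_def using Fp_le_radial_integral[OF assms that] .
  ultimately show ?thesis
    by blast
qed

end
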